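(* Let $0<C<1$, $\epsilon=1/C-1$, $k=b/((1+\epsilon)\ln b)$, and let $b$ be sufficiently large. Let $T$ be a complete tree with branching factor $b$ and let $\sigma$ be a uniformly random proper $k$-coloring of $T$. Then for every vertex $v$ of $T$, the probability that $v$ is not frozen in $\sigma$ is at most $b^{-\epsilon}$. (Leaves are always frozen.)
   Context: For a coloring $\sigma$ of $T$ and a vertex $v$, let $T_v$ be the subtree rooted at $v$ and $L(T_v)$ its leaves. $v$ is frozen in $\sigma$ if every proper coloring $\eta$ of $T$ with $\eta(L(T_v))=\sigma(L(T_v))$ has $\eta(v)=\sigma(v)$. Equivalently, leaves are frozen, and a non-leaf $v$ is frozen iff for every color $c\ne\sigma(v)$ there is a frozen child $w$ of $v$ with $\sigma(w)=c$. *)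

theory Defs
  imports Complex_Main "HOL-Library.FuncSet"
begin

text \<open>Complete tree with branching factor b and depth n: vertices are words
over {0..<b} of length at most n; the root is [], the children of v are v @ [i]
(i < b); the leaves are the words of length exactly n.\<close>

definition tree_vertices :: "nat \<Rightarrow> nat \<Rightarrow> nat list set" where
  "tree_vertices b n = {xs. length xs \<le> n \<and> set xs \<subseteq> {..<b}}"

definition tree_leaves :: "nat \<Rightarrow> nat \<Rightarrow> nat list set" where
  "tree_leaves b n = {xs \<in> tree_vertices b n. length xs = n}"

definition subtree_leaves :: "nat \<Rightarrow> nat \<Rightarrow> nat list \<Rightarrow> nat list set" where
  "subtree_leaves b n v = {l \<in> tree_leaves b n. \<exists>w. l = v @ w}"

definition proper_colorings :: "nat \<Rightarrow> nat \<Rightarrow> nat \<Rightarrow> (nat list \<Rightarrow> nat) set" where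
  "proper_colorings b n k =
     {\<sigma> \<in> PiE (tree_vertices b n) (\<lambda>_. {..<k}).
        \<forall>v i. v @ [i] \<in> tree_vertices b n \<longrightarrow> \<sigma> v \<noteq> \<sigma> (v @ [i])}"

definition frozen :: "nat \<Rightarrow> nat \<Rightarrow> nat \<Rightarrow> (nat list \<Rightarrow> nat) \<Rightarrow> nat list \<Rightarrow> bool" where
  "frozen b n k \<sigma> v \<longleftrightarrow>
     (\<forall>\<eta> \<in> proper_colorings b n k.
        (\<forall>l \<in> subtree_leaves b n v. \<eta> l = \<sigma> l) \<longrightarrow> \<eta> v = \<sigma> v)"

definition prob_not_frozen :: "nat \<Rightarrow> nat \<Rightarrow> nat \<Rightarrow> nat list \<Rightarrow> real" where
  "prob_not_frozen b n k v =
     real (card {\<sigma> \<in> proper_colorings b n k. \<not> frozen b n k \<sigma> v})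
     / real (card (proper_colorings b n k))"

end

theory Submission
  imports Defs "HOL-Real_Asymp.Real_Asymp"
begin

text \<open>Call \<open>w\<close> unfrozen if some colour \<open>c \<noteq> \<sigma> w\<close> is such that every child of \<open>w\<close> coloured \<open>c\<close>
is itself unfrozen; a vertex that is not unfrozen is frozen. Given the colour \<open>a\<close> of the root of
a tree of height \<open>h\<close>, the colourings of the \<open>b\<close> subtrees below it are independent, each uniform
among the proper colourings with root colour \<open>\<noteq> a\<close>. Suppose that, given its root colour, a tree
of height \<open>h\<close> has an unfrozen root with probability at most \<open>\<beta>\<close>. For a fixed \<open>c \<noteq> a\<close>, a child
avoids \<open>c\<close> or is coloured \<open>c\<close> and unfrozen with probability at most \<open>(k - 2 + \<beta>) / (k - 1)\<close>;
so by a union bound over \<open>c\<close> the root of the tree of height \<open>h + 1\<close> is unfrozen with probability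
at most \<open>(k - 1) (1 - (1 - \<beta>) / (k - 1))\<^sup>b \<le> (k - 1) exp (- b (1 - \<beta>) / (k - 1))\<close>. For
\<open>k \<le> C b / ln b\<close> and \<open>\<beta> = b powr - \<epsilon>\<close> this is at most \<open>\<beta>\<close> once \<open>b\<close> is large, which closes the
induction on the height. An arbitrary vertex \<open>v\<close> reduces to the root case by conditioning on
the colouring outside the strict descendants of \<open>v\<close>.\<close>

text \<open>\<open>h\<close> is the height of the subtree rooted at \<open>w\<close>, so leaves (\<open>h = 0\<close>) are never unfrozen.\<close>

fun unfrozen :: "nat \<Rightarrow> nat \<Rightarrow> nat \<Rightarrow> (nat list \<Rightarrow> nat) \<Rightarrow> nat list \<Rightarrow> bool" where
  "unfrozen b k 0 \<sigma> w = False"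
| "unfrozen b k (Suc h) \<sigma> w =
     (\<exists>c<k. c \<noteq> \<sigma> w \<and> (\<forall>i<b. \<sigma> (w @ [i]) = c \<longrightarrow> unfrozen b k h \<sigma> (w @ [i])))"

lemma unfrozen_cong:
  assumes "\<And>u. set u \<subseteq> {..<b} \<Longrightarrow> length u \<le> h \<Longrightarrow> \<sigma> (w @ u) = \<sigma>' (w' @ u)"
  shows "unfrozen b k h \<sigma> w = unfrozen b k h \<sigma>' w'"
  using assms
proof (induction h arbitrary: w w')
  case 0
  then show ?case by simp
next
  case (Suc h)
  have "\<sigma> w = \<sigma>' w'" using Suc.prems[of "[]"] by simp
  moreover have "\<sigma> (w @ [i]) = \<sigma>' (w' @ [i])" if "i < b" for i
    using Suc.prems[of "[i]"] that by simp
  moreover have "unfrozen b k h \<sigma> (w @ [i]) = unfrozen b k h \<sigma>' (w' @ [i])" if "i < b" for i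
    by (rule Suc.IH) (use Suc.prems[of "i # _"] that in auto)
  ultimately show ?case by simp
qed

lemma finite_tree_vertices: "finite (tree_vertices b n)"
proof -
  have "tree_vertices b n = {xs. set xs \<subseteq> {..<b} \<and> length xs \<le> n}"
    unfolding tree_vertices_def by auto
  then show ?thesis using finite_lists_length_le[of "{..<b}" n] by simp
qed

lemma finite_proper_colorings: "finite (proper_colorings b n k)"
proof (rule finite_subset)
  show "proper_colorings b n k \<subseteq> PiE (tree_vertices b n) (\<lambda>_. {..<k})"
    unfolding proper_colorings_def by auto
  show "finite (PiE (tree_vertices b n) (\<lambda>_. {..<k}))"
    by (intro finite_PiE finite_tree_vertices) auto
qed

lemma Nil_in_tree_vertices [simp]: "[] \<in> tree_vertices b n"
  unfolding tree_vertices_def by auto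

lemma Cons_in_tree_vertices_Suc [simp]:
  "i # u \<in> tree_vertices b (Suc h) \<longleftrightarrow> i < b \<and> u \<in> tree_vertices b h"
  unfolding tree_vertices_def by auto

lemma tree_vertices_snocD: "x @ [j] \<in> tree_vertices b n \<Longrightarrow> x \<in> tree_vertices b n"
  unfolding tree_vertices_def by auto

lemma append_in_tree_vertices_iff:
  assumes "v \<in> tree_vertices b n"
  shows "v @ u \<in> tree_vertices b n \<longleftrightarrow> u \<in> tree_vertices b (n - length v)"
  using assms unfolding tree_vertices_def by auto

lemma proper_coloringsD:
  assumes "\<sigma> \<in> proper_colorings b n k"
  shows "\<sigma> \<in> PiE (tree_vertices b n) (\<lambda>_. {..<k})"
    and "x @ [j] \<in> tree_vertices b n \<Longrightarrow> \<sigma> x \<noteq> \<sigma> (x @ [j])"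
  using assms unfolding proper_colorings_def by auto

lemma proper_coloringsI:
  assumes "\<sigma> \<in> PiE (tree_vertices b n) (\<lambda>_. {..<k})"
    and "\<And>x j. x @ [j] \<in> tree_vertices b n \<Longrightarrow> \<sigma> x \<noteq> \<sigma> (x @ [j])"
  shows "\<sigma> \<in> proper_colorings b n k"
  using assms unfolding proper_colorings_def by auto

lemma frozen_if_not_unfrozen:
  assumes "v \<in> tree_vertices b n" "\<not> unfrozen b k (n - length v) \<sigma> v"
  shows "frozen b n k \<sigma> v"
  using assms
proof (induction "n - length v" arbitrary: v)
  case 0
  then have "v \<in> subtree_leaves b n v"
    unfolding subtree_leaves_def tree_leaves_def tree_vertices_def by auto
  then show ?case unfolding frozen_def by auto
next
  case (Suc h)
  have h: "h = n - length (v @ [i])" for i using Suc.hyps(2) by simp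
  have child: "v @ [i] \<in> tree_vertices b n" if "i < b" for i
    using Suc.prems(1) Suc.hyps(2) that unfolding tree_vertices_def by auto
  have frozen_child: "\<exists>i<b. \<sigma> (v @ [i]) = c \<and> frozen b n k \<sigma> (v @ [i])"
    if c: "c < k" "c \<noteq> \<sigma> v" for c
  proof -
    obtain i where "i < b" "\<sigma> (v @ [i]) = c" "\<not> unfrozen b k h \<sigma> (v @ [i])"
      using Suc.prems(2) Suc.hyps(2)[symmetric] c by auto
    then show ?thesis using Suc.hyps(1)[OF h child] h by metis
  qed
  show ?case unfolding frozen_def
  proof (intro ballI impI)
    fix \<eta> assume \<eta>: "\<eta> \<in> proper_colorings b n k"
      and agree: "\<forall>l\<in>subtree_leaves b n v. \<eta> l = \<sigma> l"
    show "\<eta> v = \<sigma> v"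
    proof (rule ccontr)
      assume ne: "\<eta> v \<noteq> \<sigma> v"
      have "\<eta> v < k" using proper_coloringsD(1)[OF \<eta>] Suc.prems(1) by auto
      then obtain i where i: "i < b" "\<sigma> (v @ [i]) = \<eta> v" "frozen b n k \<sigma> (v @ [i])"
        using frozen_child ne by blast
      have "subtree_leaves b n (v @ [i]) \<subseteq> subtree_leaves b n v"
        unfolding subtree_leaves_def by auto
      then have "\<eta> (v @ [i]) = \<sigma> (v @ [i])"
        using i(3) \<eta> agree unfolding frozen_def by blast
      moreover have "\<eta> v \<noteq> \<eta> (v @ [i])"
        using proper_coloringsD(2)[OF \<eta> child[OF i(1)]] .
      ultimately show False using i(2) by simp
    qed
  qed
qed

definition subtree_coloring :: "nat \<Rightarrow> nat \<Rightarrow> nat list \<Rightarrow> (nat list \<Rightarrow> nat) \<Rightarrow> nat list \<Rightarrow> nat" where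
  "subtree_coloring b h v \<sigma> = (\<lambda>u. if u \<in> tree_vertices b h then \<sigma> (v @ u) else undefined)"

lemma subtree_coloring_Nil [simp]: "subtree_coloring b h v \<sigma> [] = \<sigma> v"
  unfolding subtree_coloring_def by simp

lemma subtree_coloring_proper:
  assumes \<sigma>: "\<sigma> \<in> proper_colorings b n k" and v: "v \<in> tree_vertices b n"
  shows "subtree_coloring b (n - length v) v \<sigma> \<in> proper_colorings b (n - length v) k"
proof (rule proper_coloringsI)
  show "subtree_coloring b (n - length v) v \<sigma> \<in> PiE (tree_vertices b (n - length v)) (\<lambda>_. {..<k})"
    using proper_coloringsD(1)[OF \<sigma>] append_in_tree_vertices_iff[OF v]
    unfolding subtree_coloring_def by (auto simp: PiE_iff extensional_def)
  fix x j assume xj: "x @ [j] \<in> tree_vertices b (n - length v)"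
  then have "(v @ x) @ [j] \<in> tree_vertices b n"
    using append_in_tree_vertices_iff[OF v, of "x @ [j]"] by simp
  then show "subtree_coloring b (n - length v) v \<sigma> x \<noteq> subtree_coloring b (n - length v) v \<sigma> (x @ [j])"
    using proper_coloringsD(2)[OF \<sigma>] xj tree_vertices_snocD[OF xj]
    unfolding subtree_coloring_def by (metis append.assoc)
qed

lemma child_coloring_proper:
  assumes "\<delta> \<in> proper_colorings b (Suc h) k" "i < b"
  shows "subtree_coloring b h [i] \<delta> \<in> proper_colorings b h k"
  using subtree_coloring_proper[OF assms(1), of "[i]"] assms(2) by simp

lemma unfrozen_subtree_coloring:
  "unfrozen b k h (subtree_coloring b h v \<sigma>) [] = unfrozen b k h \<sigma> v"
  by (rule unfrozen_cong) (auto simp: subtree_coloring_def tree_vertices_def)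

definition join_children ::
    "nat \<Rightarrow> nat \<Rightarrow> nat \<Rightarrow> (nat \<Rightarrow> nat list \<Rightarrow> nat) \<Rightarrow> nat list \<Rightarrow> nat" where
  "join_children b h a F = (\<lambda>x. if x \<in> tree_vertices b (Suc h)
     then (case x of [] \<Rightarrow> a | i # u \<Rightarrow> F i u) else undefined)"

lemma join_children_proper:
  assumes "a < k" and F: "\<And>i. i < b \<Longrightarrow> F i \<in> proper_colorings b h k \<and> F i [] \<noteq> a"
  shows "join_children b h a F \<in> proper_colorings b (Suc h) k"
proof (rule proper_coloringsI)
  have "join_children b h a F x \<in> {..<k}" if "x \<in> tree_vertices b (Suc h)" for x
    using that assms proper_coloringsD(1)[OF conjunct1[OF F]]
    by (cases x) (auto simp: join_children_def PiE_iff)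
  then show "join_children b h a F \<in> PiE (tree_vertices b (Suc h)) (\<lambda>_. {..<k})"
    by (auto simp: join_children_def PiE_iff extensional_def)
next
  fix x j assume xj: "x @ [j] \<in> tree_vertices b (Suc h)"
  show "join_children b h a F x \<noteq> join_children b h a F (x @ [j])"
  proof (cases x)
    case Nil
    then show ?thesis using F xj by (auto simp: join_children_def)
  next
    case (Cons i u)
    then have "i < b" "u @ [j] \<in> tree_vertices b h" using xj by auto
    then show ?thesis
      using Cons xj tree_vertices_snocD[OF xj] proper_coloringsD(2)[OF conjunct1[OF F]]
      by (auto simp: join_children_def)
  qed
qed

lemma subtree_coloring_join_children:
  assumes "F i \<in> extensional (tree_vertices b h)" "i < b"
  shows "subtree_coloring b h [i] (join_children b h a F) = F i"
  using assms by (auto simp: subtree_coloring_def join_children_def extensional_def)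

lemma join_children_subtree_colorings:
  assumes "\<delta> \<in> proper_colorings b (Suc h) k"
  shows "join_children b h (\<delta> []) (\<lambda>i. subtree_coloring b h [i] \<delta>) = \<delta>"
proof
  fix x
  show "join_children b h (\<delta> []) (\<lambda>i. subtree_coloring b h [i] \<delta>) x = \<delta> x"
    using proper_coloringsD(1)[OF assms]
    by (cases x) (auto simp: join_children_def subtree_coloring_def PiE_iff extensional_def)
qed

lemma bij_betw_child_colorings:
  fixes b h :: nat and Q :: "(nat list \<Rightarrow> nat) \<Rightarrow> bool"
  assumes a: "a < k"
  defines "A \<equiv> {\<delta> \<in> proper_colorings b (Suc h) k. \<delta> [] = a \<and> (\<forall>i<b. Q (subtree_coloring b h [i] \<delta>))}"
    and "S \<equiv> {\<delta> \<in> proper_colorings b h k. \<delta> [] \<noteq> a \<and> Q \<delta>}"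
  shows "bij_betw (\<lambda>\<delta>. \<lambda>i\<in>{..<b}. subtree_coloring b h [i] \<delta>) A (PiE {..<b} (\<lambda>_. S))"
proof -
  have ext: "F i \<in> extensional (tree_vertices b h)" if "F \<in> PiE {..<b} (\<lambda>_. S)" "i < b" for F i
    using that proper_coloringsD(1)[of "F i" b h k] unfolding S_def by (auto simp: PiE_iff)
  show ?thesis
  proof (rule bij_betw_byWitness[where f' = "join_children b h a"])
    show "\<forall>\<delta>\<in>A. join_children b h a (\<lambda>i\<in>{..<b}. subtree_coloring b h [i] \<delta>) = \<delta>"
    proof
      fix \<delta> assume "\<delta> \<in> A"
      then have "join_children b h a (\<lambda>i\<in>{..<b}. subtree_coloring b h [i] \<delta>)
          = join_children b h (\<delta> []) (\<lambda>i. subtree_coloring b h [i] \<delta>)"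
        unfolding A_def by (auto simp: join_children_def fun_eq_iff split: list.split)
      then show "join_children b h a (\<lambda>i\<in>{..<b}. subtree_coloring b h [i] \<delta>) = \<delta>"
        using join_children_subtree_colorings \<open>\<delta> \<in> A\<close> unfolding A_def by auto
    qed
    show "\<forall>F\<in>PiE {..<b} (\<lambda>_. S). (\<lambda>i\<in>{..<b}. subtree_coloring b h [i] (join_children b h a F)) = F"
      using ext subtree_coloring_join_children by (auto simp: PiE_iff extensional_def)
    show "(\<lambda>\<delta>. \<lambda>i\<in>{..<b}. subtree_coloring b h [i] \<delta>) ` A \<subseteq> PiE {..<b} (\<lambda>_. S)"
    proof (intro image_subsetI PiE_I)
      fix \<delta> i assume "\<delta> \<in> A" "i \<in> {..<b}"
      moreover have "[] @ [i] \<in> tree_vertices b (Suc h)" using \<open>i \<in> {..<b}\<close> by simp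
      ultimately show "(\<lambda>i\<in>{..<b}. subtree_coloring b h [i] \<delta>) i \<in> S"
        using child_coloring_proper proper_coloringsD(2)[of \<delta> b "Suc h" k "[]" i]
        unfolding A_def S_def by auto
    qed auto
    show "join_children b h a ` PiE {..<b} (\<lambda>_. S) \<subseteq> A"
    proof
      fix \<delta> assume "\<delta> \<in> join_children b h a ` PiE {..<b} (\<lambda>_. S)"
      then obtain F where F: "F \<in> PiE {..<b} (\<lambda>_. S)" and \<delta>: "\<delta> = join_children b h a F"
        by auto
      have "\<delta> \<in> proper_colorings b (Suc h) k"
        unfolding \<delta> by (rule join_children_proper[OF a]) (use F in \<open>auto simp: S_def\<close>)
      moreover have "\<delta> [] = a" unfolding \<delta> join_children_def by simp
      moreover have "Q (subtree_coloring b h [i] \<delta>)" if "i < b" for i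
        using subtree_coloring_join_children[of F i, OF ext[OF F that] that] F that
        unfolding \<delta> S_def by auto
      ultimately show "\<delta> \<in> A" unfolding A_def by blast
    qed
  qed
qed

lemma card_root_colored_by_children:
  assumes "a < k"
  shows "card {\<delta> \<in> proper_colorings b (Suc h) k. \<delta> [] = a \<and> (\<forall>i<b. Q (subtree_coloring b h [i] \<delta>))}
       = card {\<delta> \<in> proper_colorings b h k. \<delta> [] \<noteq> a \<and> Q \<delta>} ^ b"
  using bij_betw_same_card[OF bij_betw_child_colorings[OF assms]] by (simp add: card_PiE)

lemma card_root_ne_split:
  "card {\<delta> \<in> proper_colorings b h k. \<delta> [] \<noteq> a \<and> Q \<delta>}
     = (\<Sum>c\<in>{..<k} - {a}. card {\<delta> \<in> proper_colorings b h k. \<delta> [] = c \<and> Q \<delta>})"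
proof -
  let ?S = "{\<delta> \<in> proper_colorings b h k. \<delta> [] \<noteq> a \<and> Q \<delta>}"
  have "finite ?S" using finite_proper_colorings by simp
  moreover have "\<delta> [] \<in> {..<k} - {a}" if "\<delta> \<in> ?S" for \<delta>
    using that proper_coloringsD(1)[of \<delta>] by (auto simp: PiE_iff)
  ultimately have "(\<Sum>c\<in>{..<k} - {a}. \<Sum>\<delta>\<in>{\<delta> \<in> ?S. \<delta> [] = c}. 1::nat) = (\<Sum>\<delta>\<in>?S. 1)"
    by (intro sum.group) auto
  moreover have "{\<delta> \<in> ?S. \<delta> [] = c} = {\<delta> \<in> proper_colorings b h k. \<delta> [] = c \<and> Q \<delta>}"
    if "c \<in> {..<k} - {a}" for c
    using that by auto
  ultimately show ?thesis by simp
qed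

fun rooted_coloring_count :: "nat \<Rightarrow> nat \<Rightarrow> nat \<Rightarrow> nat" where
  "rooted_coloring_count b k 0 = 1"
| "rooted_coloring_count b k (Suc h) = ((k - 1) * rooted_coloring_count b k h) ^ b"

lemma card_proper_colorings_root:
  assumes "a < k"
  shows "card {\<delta> \<in> proper_colorings b h k. \<delta> [] = a} = rooted_coloring_count b k h"
  using assms
proof (induction h arbitrary: a)
  case 0
  have "tree_vertices b 0 = {[]}" unfolding tree_vertices_def by auto
  then have "proper_colorings b 0 k = PiE {[]} (\<lambda>_. {..<k})"
    unfolding proper_colorings_def by auto
  moreover have "{\<delta> \<in> PiE {[]} (\<lambda>_. {..<k}). \<delta> [] = a} = {\<lambda>x\<in>{[]}. a}"
    using 0 by (auto simp: PiE_iff extensional_def fun_eq_iff)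
  ultimately have "{\<delta> \<in> proper_colorings b 0 k. \<delta> [] = a} = {\<lambda>x\<in>{[]}. a}"
    by simp
  then show ?case by simp
next
  case (Suc h)
  have "card {\<delta> \<in> proper_colorings b h k. \<delta> [] \<noteq> a} = (\<Sum>c\<in>{..<k} - {a}. rooted_coloring_count b k h)"
    using card_root_ne_split[of b h k a "\<lambda>_. True"] Suc.IH by simp
  also have "\<dots> = (k - 1) * rooted_coloring_count b k h"
    using Suc.prems by simp
  finally have "card {\<delta> \<in> proper_colorings b h k. \<delta> [] \<noteq> a \<and> True} ^ b = rooted_coloring_count b k (Suc h)"
    by simp
  then show ?case
    using card_root_colored_by_children[OF Suc.prems, of b h "\<lambda>_. True"] by simp
qed

lemma card_unfrozen_or_other_root_le:
  assumes k2: "2 \<le> k" and "a < k" "c < k" "c \<noteq> a"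
    and IH: "\<And>c. c < k \<Longrightarrow> real (card {\<delta> \<in> proper_colorings b h k. \<delta> [] = c \<and> unfrozen b k h \<delta> []})
                 \<le> \<beta> * real (rooted_coloring_count b k h)"
  shows "real (card {\<delta> \<in> proper_colorings b h k. \<delta> [] \<noteq> a \<and> (\<delta> [] = c \<longrightarrow> unfrozen b k h \<delta> [])})
           \<le> (real k - 2 + \<beta>) * real (rooted_coloring_count b k h)"
proof -
  let ?N = "real (rooted_coloring_count b k h)"
  let ?card = "\<lambda>c'. real (card {\<delta> \<in> proper_colorings b h k. \<delta> [] = c' \<and> (\<delta> [] = c \<longrightarrow> unfrozen b k h \<delta> [])})"
  have "real (card {\<delta> \<in> proper_colorings b h k. \<delta> [] \<noteq> a \<and> (\<delta> [] = c \<longrightarrow> unfrozen b k h \<delta> [])})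
      = (\<Sum>c'\<in>{..<k} - {a}. ?card c')"
    by (simp add: card_root_ne_split)
  also have "\<dots> = ?card c + (\<Sum>c'\<in>{..<k} - {a} - {c}. ?card c')"
    using assms by (simp add: sum.remove)
  also have "\<dots> \<le> \<beta> * ?N + (\<Sum>c'\<in>{..<k} - {a} - {c}. ?N)"
  proof (rule add_mono)
    have "{\<delta> \<in> proper_colorings b h k. \<delta> [] = c \<and> (\<delta> [] = c \<longrightarrow> unfrozen b k h \<delta> [])}
        = {\<delta> \<in> proper_colorings b h k. \<delta> [] = c \<and> unfrozen b k h \<delta> []}"
      by blast
    then show "?card c \<le> \<beta> * ?N" using IH[of c] assms by simp
    show "(\<Sum>c'\<in>{..<k} - {a} - {c}. ?card c') \<le> (\<Sum>c'\<in>{..<k} - {a} - {c}. ?N)"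
    proof (rule sum_mono)
      fix c' assume "c' \<in> {..<k} - {a} - {c}"
      then have "{\<delta> \<in> proper_colorings b h k. \<delta> [] = c' \<and> (\<delta> [] = c \<longrightarrow> unfrozen b k h \<delta> [])}
          = {\<delta> \<in> proper_colorings b h k. \<delta> [] = c'}" and "c' < k"
        by auto
      then show "?card c' \<le> ?N" by (simp add: card_proper_colorings_root)
    qed
  qed
  also have "\<dots> = (real k - 2 + \<beta>) * ?N"
    using assms by (simp add: card_Diff_subset of_nat_diff algebra_simps)
  finally show ?thesis .
qed

lemma card_unfrozen_root_le:
  assumes k2: "2 \<le> k" and "0 \<le> \<beta>"
    and recursion: "real (k - 1) * (real k - 2 + \<beta>) ^ b \<le> \<beta> * real (k - 1) ^ b"
    and "a < k"
  shows "real (card {\<delta> \<in> proper_colorings b h k. \<delta> [] = a \<and> unfrozen b k h \<delta> []})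
           \<le> \<beta> * real (rooted_coloring_count b k h)"
  using \<open>a < k\<close>
proof (induction h arbitrary: a)
  case 0
  then show ?case using \<open>0 \<le> \<beta>\<close> by simp
next
  case (Suc h)
  let ?N = "real (rooted_coloring_count b k h)"
  define allows where "allows c \<delta>' \<longleftrightarrow> (\<delta>' [] = c \<longrightarrow> unfrozen b k h \<delta>' [])" for c \<delta>'
  define A where "A c = {\<delta> \<in> proper_colorings b (Suc h) k.
    \<delta> [] = a \<and> (\<forall>i<b. allows c (subtree_coloring b h [i] \<delta>))}" for c
  have "{\<delta> \<in> proper_colorings b (Suc h) k. \<delta> [] = a \<and> unfrozen b k (Suc h) \<delta> []}
      \<subseteq> (\<Union>c\<in>{..<k} - {a}. A c)"
    by (auto simp: A_def allows_def unfrozen_subtree_coloring)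
  then have "card {\<delta> \<in> proper_colorings b (Suc h) k. \<delta> [] = a \<and> unfrozen b k (Suc h) \<delta> []}
      \<le> card (\<Union>c\<in>{..<k} - {a}. A c)"
    by (intro card_mono) (auto simp: A_def intro: finite_subset[OF _ finite_proper_colorings])
  also have "\<dots> \<le> (\<Sum>c\<in>{..<k} - {a}. card (A c))"
    by (rule card_UN_le) simp
  finally have "real (card {\<delta> \<in> proper_colorings b (Suc h) k. \<delta> [] = a \<and> unfrozen b k (Suc h) \<delta> []})
      \<le> (\<Sum>c\<in>{..<k} - {a}. real (card (A c)))"
    unfolding of_nat_sum[symmetric] of_nat_le_iff .
  also have "\<dots> \<le> (\<Sum>c\<in>{..<k} - {a}. ((real k - 2 + \<beta>) * ?N) ^ b)"
  proof (rule sum_mono)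
    fix c assume c: "c \<in> {..<k} - {a}"
    have "card (A c) = card {\<delta> \<in> proper_colorings b h k. \<delta> [] \<noteq> a \<and> allows c \<delta>} ^ b"
      unfolding A_def by (rule card_root_colored_by_children[OF Suc.prems])
    moreover have "real (card {\<delta> \<in> proper_colorings b h k. \<delta> [] \<noteq> a \<and> allows c \<delta>})
        \<le> (real k - 2 + \<beta>) * ?N"
      unfolding allows_def
      by (rule card_unfrozen_or_other_root_le[OF k2 Suc.prems]) (use c Suc.IH in auto)
    ultimately show "real (card (A c)) \<le> ((real k - 2 + \<beta>) * ?N) ^ b"
      by (simp add: power_mono)
  qed
  also have "\<dots> = (real (k - 1) * (real k - 2 + \<beta>) ^ b) * ?N ^ b"
    using Suc.prems by (simp add: power_mult_distrib)
  also have "\<dots> \<le> (\<beta> * real (k - 1) ^ b) * ?N ^ b"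
    by (rule mult_right_mono[OF recursion]) simp
  also have "\<dots> = \<beta> * real (rooted_coloring_count b k (Suc h))"
    by (simp add: power_mult_distrib)
  finally show ?case .
qed

text \<open>A proper colouring splits into its values off the strict descendants of \<open>v\<close> and the
colouring it induces on the subtree at \<open>v\<close>; the two parts interact only through the colour of \<open>v\<close>.\<close>

definition erase_descendants :: "nat \<Rightarrow> nat \<Rightarrow> nat list \<Rightarrow> (nat list \<Rightarrow> nat) \<Rightarrow> nat list \<Rightarrow> nat" where
  "erase_descendants b n v \<sigma> =
     (\<lambda>x. if x \<in> tree_vertices b n \<and> \<not> (\<exists>u. u \<noteq> [] \<and> x = v @ u) then \<sigma> x else undefined)"

definition graft ::
    "nat \<Rightarrow> nat \<Rightarrow> nat list \<Rightarrow> (nat list \<Rightarrow> nat) \<Rightarrow> (nat list \<Rightarrow> nat) \<Rightarrow> nat list \<Rightarrow> nat" where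
  "graft b n v \<sigma> \<delta> =
     (\<lambda>x\<in>tree_vertices b n. if \<exists>u. x = v @ u then \<delta> (drop (length v) x) else \<sigma> x)"

lemma graft_append:
  "v \<in> tree_vertices b n \<Longrightarrow> u \<in> tree_vertices b (n - length v) \<Longrightarrow> graft b n v \<sigma> \<delta> (v @ u) = \<delta> u"
  by (simp add: graft_def append_in_tree_vertices_iff)

lemma graft_outside: "x \<in> tree_vertices b n \<Longrightarrow> \<nexists>u. x = v @ u \<Longrightarrow> graft b n v \<sigma> \<delta> x = \<sigma> x"
  by (simp add: graft_def)

lemma subtree_coloring_graft:
  assumes "v \<in> tree_vertices b n" "\<delta> \<in> extensional (tree_vertices b (n - length v))"
  shows "subtree_coloring b (n - length v) v (graft b n v \<sigma> \<delta>) = \<delta>"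
  using assms by (auto simp: subtree_coloring_def graft_append extensional_def)

lemma snoc_eq_append_cases: "x @ [j] = v @ u \<Longrightarrow> u = [] \<or> (\<exists>w. x = v @ w)"
  by (cases u rule: rev_cases) auto

lemma graft_PiE:
  assumes \<sigma>: "\<sigma> \<in> proper_colorings b n k" and v: "v \<in> tree_vertices b n"
    and \<delta>: "\<delta> \<in> proper_colorings b (n - length v) k"
  shows "graft b n v \<sigma> \<delta> \<in> PiE (tree_vertices b n) (\<lambda>_. {..<k})"
proof -
  have below: "graft b n v \<sigma> \<delta> (v @ u) \<in> {..<k}" if "u \<in> tree_vertices b (n - length v)" for u
    using graft_append[OF v that] PiE_mem[OF proper_coloringsD(1)[OF \<delta>] that] by simp
  have outside: "graft b n v \<sigma> \<delta> x \<in> {..<k}" if "x \<in> tree_vertices b n" "\<nexists>u. x = v @ u" for x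
    using graft_outside[OF that] PiE_mem[OF proper_coloringsD(1)[OF \<sigma>] that(1)] by simp
  have "graft b n v \<sigma> \<delta> x \<in> {..<k}" if "x \<in> tree_vertices b n" for x
    using that below outside append_in_tree_vertices_iff[OF v] by blast
  moreover have "graft b n v \<sigma> \<delta> \<in> extensional (tree_vertices b n)"
    unfolding graft_def by (rule restrict_extensional)
  ultimately show ?thesis by (simp add: PiE_iff)
qed

lemma graft_proper:
  assumes \<sigma>: "\<sigma> \<in> proper_colorings b n k" and v: "v \<in> tree_vertices b n"
    and \<delta>: "\<delta> \<in> proper_colorings b (n - length v) k" and root: "\<delta> [] = \<sigma> v"
  shows "graft b n v \<sigma> \<delta> \<in> proper_colorings b n k"
proof (rule proper_coloringsI)
  show "graft b n v \<sigma> \<delta> \<in> PiE (tree_vertices b n) (\<lambda>_. {..<k})"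
    using graft_PiE[OF \<sigma> v \<delta>] .
next
  fix x j assume xj: "x @ [j] \<in> tree_vertices b n"
  note x = tree_vertices_snocD[OF xj]
  show "graft b n v \<sigma> \<delta> x \<noteq> graft b n v \<sigma> \<delta> (x @ [j])"
  proof (cases "\<exists>u. x = v @ u")
    case True
    then obtain u where xu: "x = v @ u" by blast
    have uj: "u @ [j] \<in> tree_vertices b (n - length v)"
      using xj append_in_tree_vertices_iff[OF v, of "u @ [j]"] xu by simp
    show ?thesis
      using proper_coloringsD(2)[OF \<delta> uj] graft_append[OF v uj]
        graft_append[OF v tree_vertices_snocD[OF uj]] xu by simp
  next
    case outside: False
    show ?thesis
    proof (cases "x @ [j] = v")
      case True
      then show ?thesis
        using graft_append[OF v, of "[]"] graft_outside[OF x outside] root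
          proper_coloringsD(2)[OF \<sigma> xj] by simp
    next
      case False
      have "\<nexists>u. x @ [j] = v @ u"
      proof
        assume "\<exists>u. x @ [j] = v @ u"
        then obtain u where u: "x @ [j] = v @ u" by blast
        show False
          using snoc_eq_append_cases[OF u]
        proof
          assume "u = []"
          then show False using u False by simp
        qed (use outside in blast)
      qed
      then show ?thesis
        using graft_outside[OF x outside] graft_outside[OF xj] proper_coloringsD(2)[OF \<sigma> xj]
        by simp
    qed
  qed
qed

lemma erase_descendants_below: "u \<noteq> [] \<Longrightarrow> erase_descendants b n v \<sigma> (v @ u) = undefined"
  by (auto simp: erase_descendants_def)

lemma erase_descendants_graft:
  assumes "v \<in> tree_vertices b n" "\<delta> [] = \<sigma> v"
  shows "erase_descendants b n v (graft b n v \<sigma> \<delta>) = erase_descendants b n v \<sigma>"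
proof
  fix x
  show "erase_descendants b n v (graft b n v \<sigma> \<delta>) x = erase_descendants b n v \<sigma> x"
  proof (cases "x \<in> tree_vertices b n \<and> (\<nexists>u. x = v @ u)")
    case True
    then show ?thesis by (simp add: erase_descendants_def graft_outside)
  next
    case False
    then consider "x \<notin> tree_vertices b n" | u where "u \<noteq> []" "x = v @ u" | "x = v"
      by (metis append.right_neutral)
    then show ?thesis
    proof cases
      case 1
      then show ?thesis by (simp add: erase_descendants_def)
    next
      case 2
      then show ?thesis by (simp add: erase_descendants_below)
    next
      case 3
      have "graft b n v \<sigma> \<delta> v = \<sigma> v"
        using graft_append[OF assms(1), of "[]"] assms(2) by simp
      then show ?thesis using 3 assms(1) by (simp add: erase_descendants_def)
    qed
  qed
qed

lemma graft_subtree_coloring: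
  assumes \<sigma>: "\<sigma> \<in> proper_colorings b n k" and v: "v \<in> tree_vertices b n"
    and agree: "erase_descendants b n v \<sigma> = erase_descendants b n v \<sigma>0"
  shows "graft b n v \<sigma>0 (subtree_coloring b (n - length v) v \<sigma>) = \<sigma>"
proof
  fix x
  show "graft b n v \<sigma>0 (subtree_coloring b (n - length v) v \<sigma>) x = \<sigma> x"
  proof (cases "x \<in> tree_vertices b n")
    case True
    show ?thesis
    proof (cases "\<exists>u. x = v @ u")
      case True
      then show ?thesis using \<open>x \<in> tree_vertices b n\<close> append_in_tree_vertices_iff[OF v] v
        by (auto simp: graft_append subtree_coloring_def)
    next
      case False
      then have "erase_descendants b n v \<sigma> x = \<sigma> x" "erase_descendants b n v \<sigma>0 x = \<sigma>0 x"
        using \<open>x \<in> tree_vertices b n\<close> by (auto simp: erase_descendants_def)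
      then show ?thesis using agree False \<open>x \<in> tree_vertices b n\<close> by (simp add: graft_outside)
    qed
  next
    case False
    then show ?thesis using proper_coloringsD(1)[OF \<sigma>] by (simp add: graft_def PiE_iff extensional_def)
  qed
qed

lemma bij_betw_subtree_coloring:
  assumes \<sigma>0: "\<sigma>0 \<in> proper_colorings b n k" and v: "v \<in> tree_vertices b n"
  shows "bij_betw (subtree_coloring b (n - length v) v)
           {\<sigma> \<in> proper_colorings b n k. erase_descendants b n v \<sigma> = erase_descendants b n v \<sigma>0}
           {\<delta> \<in> proper_colorings b (n - length v) k. \<delta> [] = \<sigma>0 v}"
proof (rule bij_betw_byWitness[where f' = "graft b n v \<sigma>0"])
  have root: "erase_descendants b n v \<sigma> v = \<sigma> v" for \<sigma>
    using v by (simp add: erase_descendants_def)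
  show "\<forall>\<sigma> \<in> {\<sigma> \<in> proper_colorings b n k. erase_descendants b n v \<sigma> = erase_descendants b n v \<sigma>0}.
          graft b n v \<sigma>0 (subtree_coloring b (n - length v) v \<sigma>) = \<sigma>"
    using graft_subtree_coloring[OF _ v] by blast
  show "\<forall>\<delta> \<in> {\<delta> \<in> proper_colorings b (n - length v) k. \<delta> [] = \<sigma>0 v}.
          subtree_coloring b (n - length v) v (graft b n v \<sigma>0 \<delta>) = \<delta>"
    using subtree_coloring_graft[OF v] proper_coloringsD(1) by (auto simp: PiE_iff)
  show "subtree_coloring b (n - length v) v ` {\<sigma> \<in> proper_colorings b n k.
          erase_descendants b n v \<sigma> = erase_descendants b n v \<sigma>0}
        \<subseteq> {\<delta> \<in> proper_colorings b (n - length v) k. \<delta> [] = \<sigma>0 v}"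
  proof (intro image_subsetI CollectI conjI)
    fix \<sigma> assume \<sigma>: "\<sigma> \<in> {\<sigma> \<in> proper_colorings b n k.
      erase_descendants b n v \<sigma> = erase_descendants b n v \<sigma>0}"
    then show "subtree_coloring b (n - length v) v \<sigma> \<in> proper_colorings b (n - length v) k"
      using subtree_coloring_proper[OF _ v] by blast
    show "subtree_coloring b (n - length v) v \<sigma> [] = \<sigma>0 v"
      using \<sigma> root[of \<sigma>] root[of \<sigma>0] by simp
  qed
  show "graft b n v \<sigma>0 ` {\<delta> \<in> proper_colorings b (n - length v) k. \<delta> [] = \<sigma>0 v}
        \<subseteq> {\<sigma> \<in> proper_colorings b n k. erase_descendants b n v \<sigma> = erase_descendants b n v \<sigma>0}"
    using graft_proper[OF \<sigma>0 v] erase_descendants_graft[OF v] by auto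
qed

lemma card_fiberwise_le:
  assumes "finite A"
    and fiber: "\<And>x. x \<in> A \<Longrightarrow>
      real (card {y \<in> A. R y = R x \<and> Q y}) \<le> \<beta> * real (card {y \<in> A. R y = R x})"
  shows "real (card {x \<in> A. Q x}) \<le> \<beta> * real (card A)"
proof -
  have split: "card S = (\<Sum>t\<in>R ` A. card {x \<in> S. R x = t})" if "S \<subseteq> A" for S
  proof -
    have "(\<Sum>t\<in>R ` A. \<Sum>x\<in>{x \<in> S. R x = t}. 1::nat) = (\<Sum>x\<in>S. 1)"
      using that \<open>finite A\<close> by (intro sum.group) (auto intro: finite_subset)
    then show ?thesis by simp
  qed
  have "real (card {x \<in> A. Q x}) = (\<Sum>t\<in>R ` A. real (card {x \<in> {x \<in> A. Q x}. R x = t}))"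
    by (subst split) auto
  also have "\<dots> \<le> (\<Sum>t\<in>R ` A. \<beta> * real (card {x \<in> A. R x = t}))"
  proof (rule sum_mono)
    fix t assume "t \<in> R ` A"
    then obtain x where "x \<in> A" "t = R x" by blast
    moreover have "{z \<in> {z \<in> A. Q z}. R z = t} = {y \<in> A. R y = t \<and> Q y}" by auto
    ultimately show "real (card {z \<in> {z \<in> A. Q z}. R z = t}) \<le> \<beta> * real (card {z \<in> A. R z = t})"
      using fiber[of x] by simp
  qed
  also have "\<dots> = \<beta> * real (card A)"
    by (simp add: split[of A] sum_distrib_left)
  finally show ?thesis .
qed

lemma card_unfrozen_le:
  assumes "2 \<le> k" "0 \<le> \<beta>"
    and "real (k - 1) * (real k - 2 + \<beta>) ^ b \<le> \<beta> * real (k - 1) ^ b"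
    and v: "v \<in> tree_vertices b n"
  shows "real (card {\<sigma> \<in> proper_colorings b n k. unfrozen b k (n - length v) \<sigma> v})
           \<le> \<beta> * real (card (proper_colorings b n k))"
proof (rule card_fiberwise_le[OF finite_proper_colorings])
  fix \<sigma>0 assume \<sigma>0: "\<sigma>0 \<in> proper_colorings b n k"
  let ?h = "n - length v"
  let ?fiber = "{\<sigma> \<in> proper_colorings b n k. erase_descendants b n v \<sigma> = erase_descendants b n v \<sigma>0}"
  let ?rooted = "{\<delta> \<in> proper_colorings b ?h k. \<delta> [] = \<sigma>0 v}"
  note bij = bij_betw_subtree_coloring[OF \<sigma>0 v]
  have "\<sigma>0 v < k" using PiE_mem[OF proper_coloringsD(1)[OF \<sigma>0] v] by simp
  have "bij_betw (subtree_coloring b ?h v) {\<sigma> \<in> ?fiber. unfrozen b k ?h \<sigma> v}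
      {\<delta> \<in> ?rooted. unfrozen b k ?h \<delta> []}"
    by (rule bij_betw_Collect[OF bij]) (simp add: unfrozen_subtree_coloring)
  then have "card {\<sigma> \<in> ?fiber. unfrozen b k ?h \<sigma> v} = card {\<delta> \<in> ?rooted. unfrozen b k ?h \<delta> []}"
    by (rule bij_betw_same_card)
  moreover have "{\<delta> \<in> ?rooted. unfrozen b k ?h \<delta> []}
      = {\<delta> \<in> proper_colorings b ?h k. \<delta> [] = \<sigma>0 v \<and> unfrozen b k ?h \<delta> []}"
    by auto
  then have "real (card {\<delta> \<in> ?rooted. unfrozen b k ?h \<delta> []}) \<le> \<beta> * real (card ?rooted)"
    using card_unfrozen_root_le[OF assms(1-3) \<open>\<sigma>0 v < k\<close>, of ?h]
    unfolding card_proper_colorings_root[OF \<open>\<sigma>0 v < k\<close>] by simp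
  moreover have "card ?rooted = card ?fiber"
    using bij_betw_same_card[OF bij] by simp
  ultimately show "real (card {\<sigma> \<in> proper_colorings b n k.
        erase_descendants b n v \<sigma> = erase_descendants b n v \<sigma>0 \<and> unfrozen b k ?h \<sigma> v})
      \<le> \<beta> * real (card ?fiber)"
    by (simp add: conj_commute conj_left_commute)
qed

lemma prob_not_frozen_le:
  assumes "2 \<le> k" "0 \<le> \<beta>"
    and "real (k - 1) * (real k - 2 + \<beta>) ^ b \<le> \<beta> * real (k - 1) ^ b"
    and v: "v \<in> tree_vertices b n"
  shows "prob_not_frozen b n k v \<le> \<beta>"
proof -
  have "{\<sigma> \<in> proper_colorings b n k. \<not> frozen b n k \<sigma> v}
      \<subseteq> {\<sigma> \<in> proper_colorings b n k. unfrozen b k (n - length v) \<sigma> v}"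
    using frozen_if_not_unfrozen[OF v] by blast
  then have "card {\<sigma> \<in> proper_colorings b n k. \<not> frozen b n k \<sigma> v}
      \<le> card {\<sigma> \<in> proper_colorings b n k. unfrozen b k (n - length v) \<sigma> v}"
    by (intro card_mono) (auto intro: finite_subset[OF _ finite_proper_colorings])
  then have "real (card {\<sigma> \<in> proper_colorings b n k. \<not> frozen b n k \<sigma> v})
      \<le> \<beta> * real (card (proper_colorings b n k))"
    using card_unfrozen_le[OF assms] by linarith
  then show ?thesis
    using \<open>0 \<le> \<beta>\<close> unfolding prob_not_frozen_def
    by (cases "card (proper_colorings b n k) = 0") (simp_all add: divide_le_eq)
qed

lemma mult_exp_neg_divide_mono:
  fixes s t c :: real
  assumes "0 < s" "s \<le> t" "0 \<le> c"
  shows "s * exp (- (c / s)) \<le> t * exp (- (c / t))"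
proof (rule mult_mono)
  have "c / t \<le> c / s" using assms by (intro divide_left_mono) auto
  then show "exp (- (c / s)) \<le> exp (- (c / t))" by simp
qed (use assms in auto)

lemma recursion_inequality:
  fixes C :: real and b k :: nat
  defines "\<beta> \<equiv> real b powr (- (1/C - 1))"
  assumes C: "0 < C" "C < 1" and L3: "3 \<le> ln (real b)"
    and small: "ln (real b) * \<beta> \<le> C"
    and k: "2 \<le> k" "real k \<le> C * real b / ln (real b)"
  shows "real (k - 1) * (real k - 2 + \<beta>) ^ b \<le> \<beta> * real (k - 1) ^ b"
proof -
  define L where "L = ln (real b)"
  define K where "K = real (k - 1)"
  define x where "x = (1 - \<beta>) / K"
  define q where "q = C * real b / L"
  have "0 < real b" using L3 by (cases b) auto
  then have b: "real b = exp L" unfolding L_def by simp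
  have "0 < L" using L3 unfolding L_def by simp
  have \<beta>: "\<beta> = exp (L - L / C)"
    unfolding \<beta>_def b powr_def by (simp add: algebra_simps diff_divide_distrib)
  have "L \<le> L / C" using C \<open>0 < L\<close> by (simp add: le_divide_eq)
  then have "\<beta> \<le> 1" unfolding \<beta> by simp
  have K: "K = real k - 1" "1 \<le> K" using k unfolding K_def by auto
  have "0 < \<beta>" unfolding \<beta> by simp
  have "x \<le> 1" using \<open>0 < \<beta>\<close> K unfolding x_def by (auto simp: divide_le_eq)
  have "K * x = 1 - \<beta>" using K unfolding x_def by simp
  then have "real k - 2 + \<beta> = K * (1 - x)"
    using K(1) by (simp add: right_diff_distrib)
  have "K * (1 - x) ^ b \<le> K * exp (- x) ^ b"
    using \<open>x \<le> 1\<close> K by (intro mult_left_mono power_mono exp_minus_ge) auto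
  also have "\<dots> = K * exp (- (real b * (1 - \<beta>) / K))"
    unfolding x_def by (simp add: exp_of_nat_mult[symmetric])
  also have "\<dots> \<le> q * exp (- (real b * (1 - \<beta>) / q))"
  proof (rule mult_exp_neg_divide_mono)
    show "K \<le> q" using k(2) K(1) unfolding q_def L_def by simp
    show "0 \<le> real b * (1 - \<beta>)" using \<open>\<beta> \<le> 1\<close> by simp
  qed (use K in simp)
  also have "real b * (1 - \<beta>) / q = L / C - \<beta> * L / C"
    using C \<open>0 < L\<close> \<open>0 < real b\<close> unfolding q_def by (simp add: field_simps)
  also have "q * exp (- (L / C - \<beta> * L / C)) = (C / L * exp (\<beta> * L / C)) * \<beta>"
  proof -
    have "q * exp (- (L / C - \<beta> * L / C)) = C / L * (exp L * exp (- (L / C))) * exp (\<beta> * L / C)"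
      unfolding q_def b by (simp add: exp_add[symmetric])
    also have "exp L * exp (- (L / C)) = \<beta>" unfolding \<beta> by (simp add: exp_add[symmetric])
    finally show ?thesis by simp
  qed
  also have "\<dots> \<le> 1 * \<beta>"
  proof (rule mult_right_mono)
    \<comment> \<open>\<open>\<beta> L / C \<le> 1\<close> and \<open>C e < 3 \<le> L\<close>\<close>
    have "exp (\<beta> * L / C) \<le> exp 1"
      using small C unfolding L_def by (simp add: mult.commute)
    also have "\<dots> \<le> 3" by (rule exp_le)
    finally have "C * exp (\<beta> * L / C) \<le> L"
      using C L3 unfolding L_def by (smt (verit) exp_gt_zero mult_left_le_one_le)
    then show "C / L * exp (\<beta> * L / C) \<le> 1" using \<open>0 < L\<close> by (simp add: divide_le_eq)
  qed (simp add: \<beta>)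
  finally have "K * (1 - x) ^ b \<le> \<beta>" by simp
  have "real (k - 1) * (real k - 2 + \<beta>) ^ b = K ^ b * (K * (1 - x) ^ b)"
    unfolding \<open>real k - 2 + \<beta> = K * (1 - x)\<close> K_def by (simp add: power_mult_distrib)
  also have "\<dots> \<le> K ^ b * \<beta>"
    using \<open>K * (1 - x) ^ b \<le> \<beta>\<close> K by (intro mult_left_mono) auto
  finally show ?thesis unfolding K_def by (simp add: mult.commute)
qed

lemma eventually_large_base:
  fixes C :: real
  assumes "0 < C" "C < 1"
  shows "\<forall>\<^sub>F y in at_top. 3 \<le> ln y \<and> ln y * y powr (- (1/C - 1)) \<le> C \<and> 3 \<le> C * y / ln y"
proof -
  have "1/C - 1 > 0" using assms by (simp add: field_simps)
  then have "((\<lambda>y::real. ln y * y powr (- (1/C - 1))) \<longlongrightarrow> 0) at_top" by real_asymp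
  then have "\<forall>\<^sub>F y in at_top. ln y * y powr (- (1/C - 1)) < C"
    using \<open>0 < C\<close> by (rule order_tendstoD)
  moreover have "filterlim (\<lambda>y::real. C * y / ln y) at_top at_top"
    using \<open>0 < C\<close> by real_asymp
  then have "\<forall>\<^sub>F y in at_top. 3 \<le> C * y / ln y" by (simp add: filterlim_at_top)
  moreover have "filterlim (\<lambda>y::real. ln y) at_top at_top" by real_asymp
  then have "\<forall>\<^sub>F y in at_top. 3 \<le> ln (y::real)" by (simp add: filterlim_at_top)
  ultimately show ?thesis by eventually_elim auto
qed

theorem lemma7:
  fixes C :: real
  assumes "0 < C" and "C < 1"
  shows "\<exists>B. \<forall>b::nat \<ge> B. \<forall>n::nat. \<forall>v \<in> tree_vertices b n.
           prob_not_frozen b n (nat \<lfloor>real b / ((1 + (1/C - 1)) * ln (real b))\<rfloor>) v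
             \<le> real b powr (- (1/C - 1))"
proof -
  obtain N where N: "\<And>y. N \<le> y \<Longrightarrow>
      3 \<le> ln y \<and> ln y * y powr (- (1/C - 1)) \<le> C \<and> 3 \<le> C * y / ln y"
    using eventually_large_base[OF assms] unfolding eventually_at_top_linorder by blast
  show ?thesis
  proof (intro exI[of _ "nat \<lceil>N\<rceil>"] allI impI ballI)
    fix b n :: nat and v assume "nat \<lceil>N\<rceil> \<le> b" and v: "v \<in> tree_vertices b n"
    then have large: "3 \<le> ln (real b)" "ln (real b) * real b powr (- (1/C - 1)) \<le> C"
      "3 \<le> C * real b / ln (real b)"
      using N[of "real b"] by linarith+
    define k where "k = nat \<lfloor>real b / ((1 + (1/C - 1)) * ln (real b))\<rfloor>"
    have "real b / ((1 + (1/C - 1)) * ln (real b)) = C * real b / ln (real b)"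
      using assms by simp
    then have k: "2 \<le> k" "real k \<le> C * real b / ln (real b)"
      unfolding k_def using large(3) by linarith+
    show "prob_not_frozen b n k v \<le> real b powr (- (1/C - 1))"
      using recursion_inequality[OF assms large(1,2) k] k(1) v
      by (intro prob_not_frozen_le) auto
  qed
qed

end
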